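(* A map $T:\mathrm{PSym}(3)\to\mathrm{Sym}(3)$ satisfies Axioms (A0.1), (A0.2), (A0.3), (A1), (A2) and (A3) if and only if there exist constants $G,\Lambda\in\mathbb R$ with $G\neq0$ and $3\Lambda+2G\neq0$ such that $$T(U)=2G\,\log U+\Lambda\,\mathrm{tr}(\log U)\,\mathbb 1\qquad\text{for all }U\in\mathrm{PSym}(3),$$ equivalently, constants $G,K\in\mathbb R\setminus\{0\}$ with $T(U)=2G\,\mathrm{dev}_3\log U+K\,\mathrm{tr}(\log U)\,\mathbb 1$ for all $U\in\mathrm{PSym}(3)$ (where $K=\Lambda+\tfrac23 G$).
   Context: $\mathrm{Sym}(3)$: real symmetric $3\times3$ matrices; $\mathrm{PSym}(3)$: symmetric positive definite ones; $\mathbb 1$: identity; $\mathrm{O}(3)$: orthogonal group; $\log:\mathrm{PSym}(3)\to\mathrm{Sym}(3)$ the principal matrix logarithm; $\mathrm{dev}_3X=X-\tfrac13\mathrm{tr}(X)\mathbb 1$; coaxial means commuting. Axiom (A0.1): $T$ continuous. Axiom (A0.2): $T(U)=0$ iff $U=\mathbb 1$. Axiom (A0.3): $T(Q^TUQ)=Q^TT(U)Q$ for all $Q\in\mathrm O(3)$, $U\in\mathrm{PSym}(3)$. Axiom (A1): for every $\alpha>0$ there is $s\in\mathbb R$ such that for all $U\in\mathrm{PSym}(3)$: $U=\mathrm{diag}(\alpha,\alpha^{-1},1)$ iff $T(U)=\mathrm{diag}(s,-s,0)$. Axiom (A2): for every $\lambda>0$ there is $a\in\mathbb R$ such that for all $U\in\mathrm{PSym}(3)$: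 $U=\lambda\mathbb 1$ iff $T(U)=a\mathbb 1$. Axiom (A3): $T(U_1U_2)=T(U_1)+T(U_2)$ for all coaxial $U_1,U_2\in\mathrm{PSym}(3)$. *)

theory Defs
  imports "HOL-Analysis.Analysis"
begin

type_synonym mat3 = "real^3^3"

definition Sym3 :: "mat3 set" where
  "Sym3 = {A. transpose A = A}"

definition PSym3 :: "mat3 set" where
  "PSym3 = {U. transpose U = U \<and> (\<forall>x::real^3. x \<noteq> 0 \<longrightarrow> x \<bullet> (U *v x) > 0)}"

primrec matpow :: "mat3 \<Rightarrow> nat \<Rightarrow> mat3" where
  "matpow A 0 = mat 1"
| "matpow A (Suc n) = A ** matpow A n"

definition mexp :: "mat3 \<Rightarrow> mat3" where
  "mexp A = (\<Sum>n. (1 / fact n) *\<^sub>R matpow A n)"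

definition mlog :: "mat3 \<Rightarrow> mat3" where
  "mlog U = (THE L. L \<in> Sym3 \<and> mexp L = U)"

definition dev3 :: "mat3 \<Rightarrow> mat3" where
  "dev3 X = X - (trace X / 3) *\<^sub>R mat 1"

definition diag3 :: "real \<Rightarrow> real \<Rightarrow> real \<Rightarrow> mat3" where
  "diag3 a b c = (\<chi> i j. if i = j then (if i = 1 then a else if i = 2 then b else c) else 0)"

definition coaxial :: "mat3 \<Rightarrow> mat3 \<Rightarrow> bool" where
  "coaxial A B \<longleftrightarrow> A ** B = B ** A"

definition axioms_T :: "(mat3 \<Rightarrow> mat3) \<Rightarrow> bool" where
  "axioms_T T \<longleftrightarrow>
     continuous_on PSym3 T
   \<and> (\<forall>U\<in>PSym3. T U = 0 \<longleftrightarrow> U = mat 1)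
   \<and> (\<forall>Q U. orthogonal_matrix Q \<longrightarrow> U \<in> PSym3 \<longrightarrow>
          T (transpose Q ** U ** Q) = transpose Q ** T U ** Q)
   \<and> (\<forall>\<alpha>>0. \<exists>s. \<forall>U\<in>PSym3. U = diag3 \<alpha> (1/\<alpha>) 1 \<longleftrightarrow> T U = diag3 s (-s) 0)
   \<and> (\<forall>l>0. \<exists>a. \<forall>U\<in>PSym3. U = l *\<^sub>R mat 1 \<longleftrightarrow> T U = a *\<^sub>R mat 1)
   \<and> (\<forall>U1\<in>PSym3. \<forall>U2\<in>PSym3. coaxial U1 U2 \<longrightarrow> T (U1 ** U2) = T U1 + T U2)"

end

(*
  If T satisfies the axioms, isotropy (A0.3) under sign changes and coordinate permutations shows
  that T maps positive diagonal matrices to diagonal ones and that F(x) := diagonal of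
  T(diag(exp x)) commutes with permutations of the coordinates. By (A3) F is additive, hence linear
  by continuity (A0.1), and a linear map on R^3 commuting with coordinate permutations has the form
  F(x) = 2G x + Lambda (x1 + x2 + x3) (1,1,1). The spectral theorem and isotropy extend this to
  T(U) = 2G log U + Lambda tr(log U) 1, and (A0.2) rules out G = 0 and 3 Lambda + 2G = 0.

  Conversely, for such T the map log U |-> T(U) is injective, so each of the "iff" axioms reduces
  to evaluating T at a single matrix. Continuity of log on PSym(3) is a closed-graph argument:
  locally PSym(3) lies in the image of the compact set O(3) x [-R,R]^3 under
  (Q, x) |-> Q diag(exp x) Q^T, on which log is the continuous map (Q, x) |-> Q diag(x) Q^T.
*)
theory Submission
  imports Defs
begin

declare transpose_matrix_vector [simp del]

lemma if_zero_mult: "(if P then a else 0) * b = (if P then a * b else (0::'a::mult_zero))"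
  and mult_if_zero: "b * (if P then a else 0) = (if P then b * a else (0::'a::mult_zero))"
  by simp_all

lemma trace_scaleR: "trace (c *\<^sub>R A) = c * trace (A::real^'n^'n)"
  by (simp add: trace_def sum_distrib_left)

definition diag_mat :: "'a::zero^'n \<Rightarrow> 'a^'n^'n" where
  "diag_mat v = (\<chi> i j. if i = j then v$i else 0)"

lemma diag_mat_nth [simp]: "diag_mat v $ i $ j = (if i = j then v$i else 0)"
  by (simp add: diag_mat_def)

lemma diag_mat_mult_diag_mat: "diag_mat a ** diag_mat b = diag_mat (a * (b::'a::semiring_1^'n))"
  by (simp add: matrix_matrix_mult_def vec_eq_iff if_zero_mult mult_if_zero sum.delta)

lemma diag_mat_one: "diag_mat 1 = (mat 1 :: 'a::semiring_1^'n^'n)"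
  by (simp add: vec_eq_iff mat_def)

lemma diag_mat_mult_vec: "diag_mat v *v x = v * (x::'a::semiring_1^'n)"
  by (simp add: matrix_vector_mult_def vec_eq_iff if_zero_mult sum.delta)

lemma diag_mat_sandwich_nth:
  "(diag_mat s ** M ** diag_mat t) $ i $ j = s$i * M$i$j * (t$j :: 'a::semiring_1)"
  by (simp add: matrix_matrix_mult_def if_zero_mult mult_if_zero sum.delta)

lemma transpose_diag_mat [simp]: "transpose (diag_mat v) = diag_mat v"
  by (simp add: transpose_def vec_eq_iff)

lemma diag_mat_add: "diag_mat (a + b) = diag_mat a + (diag_mat b :: 'a::monoid_add^'n^'n)"
  by (simp add: vec_eq_iff)

lemma diag_mat_scaleR: "diag_mat (c *\<^sub>R a) = c *\<^sub>R (diag_mat a :: real^'n^'n)"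
  by (simp add: vec_eq_iff)

lemma bounded_linear_diag_mat: "bounded_linear (diag_mat :: real^'n \<Rightarrow> real^'n^'n)"
  by (simp add: linear_conv_bounded_linear[symmetric] linearI diag_mat_add diag_mat_scaleR)

lemma trace_diag_mat: "trace (diag_mat v) = (\<Sum>i\<in>UNIV. v$i)"
  by (simp add: trace_def)

lemma continuous_on_diag_mat [continuous_intros]:
  fixes f :: "'a::topological_space \<Rightarrow> real^'n"
  assumes "continuous_on S f"
  shows "continuous_on S (\<lambda>x. diag_mat (f x))"
  using bounded_linear.continuous_on[OF bounded_linear_diag_mat assms] .

lemma diag3_eq_diag_mat: "diag3 a b c = diag_mat (vector [a, b, c])"
  by (simp add: diag3_def diag_mat_def vec_eq_iff vector_def forall_3)

lemma scaleR_mat_one_eq_diag_mat: "c *\<^sub>R mat 1 = diag_mat (\<chi> i. c)"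
  by (simp add: vec_eq_iff mat_def)

definition vec_map :: "('a \<Rightarrow> 'b) \<Rightarrow> 'a^'n \<Rightarrow> 'b^'n" where
  "vec_map f v = (\<chi> i. f (v$i))"

lemma vec_map_nth [simp]: "vec_map f v $ i = f (v$i)"
  by (simp add: vec_map_def)

lemma vec_map_vec_map [simp]: "vec_map f (vec_map g v) = vec_map (\<lambda>x. f (g x)) v"
  by (simp add: vec_eq_iff)

lemma vec_map_ident: "(\<And>i. f (v$i) = v$i) \<Longrightarrow> vec_map f v = v"
  by (simp add: vec_eq_iff)

lemma continuous_on_vec_map_exp [continuous_intros]:
  fixes f :: "'a::topological_space \<Rightarrow> real^'n"
  assumes "continuous_on S f"
  shows "continuous_on S (\<lambda>x. vec_map exp (f x))"
  unfolding vec_map_def by (intro continuous_intros continuous_on_component assms)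

definition orth_conj :: "real^'n^'n \<Rightarrow> real^'n^'n \<Rightarrow> real^'n^'n" where
  "orth_conj P M = P ** M ** transpose P"

lemma orth_conj_mult:
  assumes "orthogonal_matrix P"
  shows "orth_conj P (M ** N) = orth_conj P M ** orth_conj P N"
proof -
  have "orth_conj P M ** orth_conj P N = P ** M ** (transpose P ** P) ** N ** transpose P"
    by (simp add: orth_conj_def matrix_mul_assoc)
  with assms show ?thesis
    by (simp add: orthogonal_matrix_def orth_conj_def matrix_mul_assoc)
qed

lemma orth_conj_mat_one: "orthogonal_matrix P \<Longrightarrow> orth_conj P (mat 1) = mat 1"
  by (simp add: orth_conj_def orthogonal_matrix_def)

lemma orth_conj_add: "orth_conj P (M + N) = orth_conj P M + orth_conj P N"
  by (simp add: orth_conj_def matrix_matrix_mult_def vec_eq_iff sum.distrib distrib_left distrib_right)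

lemma orth_conj_scaleR: "orth_conj P (c *\<^sub>R M) = c *\<^sub>R orth_conj P M"
  by (simp add: orth_conj_def scalar_matrix_assoc matrix_scalar_ac)

lemma bounded_linear_orth_conj: "bounded_linear (orth_conj P)"
  by (simp add: linear_conv_bounded_linear[symmetric] linearI orth_conj_add orth_conj_scaleR)

lemma transpose_orth_conj: "transpose (orth_conj P M) = orth_conj P (transpose M)"
  by (simp add: orth_conj_def matrix_transpose_mul matrix_mul_assoc)

lemma transpose_orth_conj_diag_mat [simp]: "transpose (orth_conj P (diag_mat x)) = orth_conj P (diag_mat x)"
  by (simp add: transpose_orth_conj)

lemma trace_orth_conj: "orthogonal_matrix P \<Longrightarrow> trace (orth_conj P M) = trace M"
  by (simp add: orth_conj_def trace_mul_sym matrix_mul_assoc orthogonal_matrix_def)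

lemma orth_conj_orth_conj: "orth_conj P (orth_conj Q M) = orth_conj (P ** Q) M"
  by (simp add: orth_conj_def matrix_transpose_mul matrix_mul_assoc)

lemma orth_conj_id: "orth_conj (mat 1) M = M"
  by (simp add: orth_conj_def)

lemma orth_conj_mult_vec: "orth_conj P M *v v = P *v (M *v (transpose P *v v))"
  by (simp add: orth_conj_def matrix_vector_mul_assoc matrix_mul_assoc)

lemma continuous_on_orth_conj [continuous_intros]:
  fixes f g :: "'a::topological_space \<Rightarrow> real^'n^'n"
  assumes "continuous_on S f" "continuous_on S g"
  shows "continuous_on S (\<lambda>x. orth_conj (f x) (g x))"
  unfolding orth_conj_def matrix_matrix_mult_def transpose_def
  by (intro continuous_intros continuous_on_component assms)

lemma matrix_mult_diag_mat_eq_iff_columns: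
  "A ** P = P ** diag_mat a \<longleftrightarrow> (\<forall>j. A *v column j P = a$j *\<^sub>R column j (P::real^'n^'n))"
  by (auto simp: vec_eq_iff matrix_matrix_mult_def matrix_vector_mult_def column_def
      mult_if_zero sum.delta mult.commute)

lemma orth_conj_diag_mat_column:
  assumes "orthogonal_matrix P"
  shows "orth_conj P (diag_mat y) *v column j P = y$j *\<^sub>R column j P"
proof -
  have "orth_conj P (diag_mat y) ** P = P ** diag_mat y"
    using assms by (simp add: orth_conj_def matrix_mul_assoc[symmetric] orthogonal_matrix_def)
  then show ?thesis
    by (simp add: matrix_mult_diag_mat_eq_iff_columns)
qed

lemma eq_orth_conj_diag_mat_if_eigenvectors:
  assumes "orthogonal_matrix P" and "\<And>j. A *v column j P = a$j *\<^sub>R column j P"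
  shows "A = orth_conj P (diag_mat a)"
proof -
  have "A ** P = P ** diag_mat a"
    using assms(2) by (simp add: matrix_mult_diag_mat_eq_iff_columns)
  then have "A ** (P ** transpose P) = P ** diag_mat a ** transpose P"
    by (simp add: matrix_mul_assoc)
  with assms(1) show ?thesis
    by (simp add: orthogonal_matrix_def orth_conj_def)
qed

lemma orth_conj_diag_mat_eigenvector_vec_map:
  assumes P: "orthogonal_matrix P" and ev: "orth_conj P (diag_mat e) *v v = \<mu> *\<^sub>R v"
  shows "orth_conj P (diag_mat (vec_map f e)) *v v = f \<mu> *\<^sub>R v"
proof -
  define c where "c = transpose P *v v"
  have v: "v = P *v c"
    using P by (simp add: c_def matrix_vector_mul_assoc orthogonal_matrix_def)
  have "P *v (e * c) = \<mu> *\<^sub>R v"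
    using ev by (simp add: orth_conj_mult_vec diag_mat_mult_vec c_def)
  then have "transpose P *v (P *v (e * c)) = \<mu> *\<^sub>R c"
    by (simp add: c_def matrix_vector_mult_scaleR)
  then have "e * c = \<mu> *\<^sub>R c"
    using P by (simp add: matrix_vector_mul_assoc orthogonal_matrix_def)
  then have "e$i = \<mu> \<or> c$i = 0" for i
    by (auto simp: vec_eq_iff dest: spec[of _ i])
  then have "f (e$i) * c$i = f \<mu> * c$i" for i
    by (metis mult_zero_right)
  then have fec: "vec_map f e * c = f \<mu> *\<^sub>R c"
    by (simp add: vec_eq_iff)
  have "orth_conj P (diag_mat (vec_map f e)) *v v = P *v (vec_map f e * c)"
    by (simp add: orth_conj_mult_vec diag_mat_mult_vec c_def)
  also have "\<dots> = f \<mu> *\<^sub>R v"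
    by (simp add: fec matrix_vector_mult_scaleR flip: v)
  finally show ?thesis .
qed

lemma quadratic_form_orth_conj_diag_mat:
  assumes "orthogonal_matrix Q"
  shows "x \<bullet> (orth_conj Q (diag_mat d) *v x) = (\<Sum>i\<in>UNIV. d$i * ((transpose Q *v x)$i)\<^sup>2)"
    and "norm (transpose Q *v x) = norm x"
proof -
  define c where "c = transpose Q *v x"
  have "x \<bullet> (orth_conj Q (diag_mat d) *v x) = c \<bullet> (d * c)"
    by (simp add: orth_conj_mult_vec diag_mat_mult_vec c_def transpose_matrix_vector dot_lmul_matrix)
  then show "x \<bullet> (orth_conj Q (diag_mat d) *v x) = (\<Sum>i\<in>UNIV. d$i * ((transpose Q *v x)$i)\<^sup>2)"
    by (simp add: c_def inner_vec_def power2_eq_square mult_ac)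
  have "c \<bullet> c = x \<bullet> (Q *v c)"
    by (simp add: c_def transpose_matrix_vector dot_lmul_matrix)
  also have "\<dots> = x \<bullet> x"
    using assms by (simp add: c_def matrix_vector_mul_assoc orthogonal_matrix_def)
  finally show "norm (transpose Q *v x) = norm x"
    by (simp add: c_def norm_eq_sqrt_inner)
qed

section \<open>Simultaneous diagonalization of commuting symmetric matrices\<close>

lemma symmetric_inner_swap: "transpose A = A \<Longrightarrow> x \<bullet> (A *v y) = (A *v x) \<bullet> (y::real^'n)"
  by (metis dot_lmul_matrix transpose_matrix_vector)

lemma linear_le_quadratic_imp_zero:
  fixes a c :: real
  assumes "\<And>t. 2 * t * a \<le> t\<^sup>2 * c"
  shows "a = 0"
proof (rule ccontr)
  assume "a \<noteq> 0"
  define d where "d = \<bar>c\<bar> + 1"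
  have d: "d > 0" by (simp add: d_def add_nonneg_pos)
  have "2 * (a / d) * a \<le> (a / d)\<^sup>2 * c" by (rule assms)
  then have "a\<^sup>2 * (2 * d) \<le> a\<^sup>2 * c"
    using d by (simp add: field_simps power2_eq_square)
  then have "2 * d \<le> c" using \<open>a \<noteq> 0\<close> by simp
  then show False by (simp add: d_def)
qed

lemma quadratic_form_max_on_subspace:
  fixes A :: "real^'n^'n"
  assumes W: "subspace W" and x: "x \<in> W" "x \<noteq> 0"
  obtains v where "v \<in> W" "norm v = 1" "\<And>y. y \<in> W \<Longrightarrow> y \<bullet> (A *v y) \<le> (v \<bullet> (A *v v)) * (y \<bullet> y)"
proof -
  define K where "K = W \<inter> sphere 0 1"
  have "compact K"
    unfolding K_def using W by (simp add: closed_subspace closed_Int_compact)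
  moreover have "x /\<^sub>R norm x \<in> K" using x W by (simp add: K_def subspace_scale)
  moreover have "continuous_on K (\<lambda>y. y \<bullet> (A *v y))"
    by (intro continuous_intros linear_continuous_on matrix_vector_mul_linear)
  ultimately obtain v where v: "v \<in> K" and max: "\<And>y. y \<in> K \<Longrightarrow> y \<bullet> (A *v y) \<le> v \<bullet> (A *v v)"
    using continuous_attains_sup[of K] by blast
  have "y \<bullet> (A *v y) \<le> (v \<bullet> (A *v v)) * (y \<bullet> y)" if "y \<in> W" for y
  proof (cases "y = 0")
    case False
    then have "y /\<^sub>R norm y \<in> K" using that W by (simp add: K_def subspace_scale)
    then have "(y /\<^sub>R norm y) \<bullet> (A *v (y /\<^sub>R norm y)) \<le> v \<bullet> (A *v v)" by (rule max)
    with False show ?thesis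
      by (simp add: matrix_vector_mult_scaleR divide_simps power2_norm_eq_inner[symmetric]
          power2_eq_square mult.commute)
  qed simp
  with v show ?thesis using that by (auto simp: K_def)
qed

lemma symmetric_eigenvector_in_invariant_subspace:
  fixes A :: "real^'n^'n"
  assumes sym: "transpose A = A" and W: "subspace W" and x: "x \<in> W" "x \<noteq> 0"
    and inv: "\<And>y. y \<in> W \<Longrightarrow> A *v y \<in> W"
  obtains v where "v \<in> W" "norm v = 1" "A *v v = (v \<bullet> (A *v v)) *\<^sub>R v"
proof -
  obtain v where v: "v \<in> W" "norm v = 1"
    and max: "\<And>y. y \<in> W \<Longrightarrow> y \<bullet> (A *v y) \<le> (v \<bullet> (A *v v)) * (y \<bullet> y)"
    using quadratic_form_max_on_subspace[OF W x] by blast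
  define \<mu> where "\<mu> = v \<bullet> (A *v v)"
  have vv: "v \<bullet> v = 1" using v by (simp add: norm_eq_1)
  \<comment> \<open>First variation of the Rayleigh quotient at its maximum \<open>v\<close> in a direction \<open>w \<bottom> v\<close>.\<close>
  have perp: "w \<bullet> (A *v v) = 0" if "w \<in> W" "w \<bullet> v = 0" for w
  proof (rule linear_le_quadratic_imp_zero)
    fix t :: real
    have "v + t *\<^sub>R w \<in> W" using W v that by (simp add: subspace_add subspace_scale)
    then have "(v + t *\<^sub>R w) \<bullet> (A *v (v + t *\<^sub>R w)) \<le> \<mu> * ((v + t *\<^sub>R w) \<bullet> (v + t *\<^sub>R w))"
      unfolding \<mu>_def by (rule max)
    moreover have "v \<bullet> (A *v w) = w \<bullet> (A *v v)"
      using symmetric_inner_swap[OF sym, of v w] by (simp add: inner_commute)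
    ultimately show "2 * t * (w \<bullet> (A *v v)) \<le> t\<^sup>2 * (\<mu> * (w \<bullet> w) - w \<bullet> (A *v w))"
      using vv that(2) by (simp add: matrix_vector_right_distrib matrix_vector_mult_scaleR inner_add_left
          inner_add_right inner_commute[of w v] \<mu>_def algebra_simps power2_eq_square)
  qed
  define w where "w = A *v v - \<mu> *\<^sub>R v"
  have "w \<in> W" using inv v W by (simp add: w_def subspace_diff subspace_scale)
  moreover have "w \<bullet> v = 0"
    using vv by (simp add: w_def inner_diff_left \<mu>_def inner_commute[of "A *v v" v])
  moreover have "w \<bullet> w = w \<bullet> (A *v v) - \<mu> * (w \<bullet> v)"
    by (simp add: w_def inner_diff_right)
  ultimately have "w \<bullet> w = 0" by (simp add: perp)
  then show ?thesis using that v by (simp add: w_def \<mu>_def)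
qed

lemma subspace_eigenspace: "subspace {x. (A::real^'n^'n) *v x = c *\<^sub>R x}"
  by (auto simp: subspace_def matrix_vector_right_distrib matrix_vector_mult_scaleR algebra_simps)

lemma commuting_symmetric_common_eigenvector:
  fixes A B :: "real^'n^'n"
  assumes symA: "transpose A = A" and symB: "transpose B = B" and comm: "A ** B = B ** A"
    and W: "subspace W" and x: "x \<in> W" "x \<noteq> 0"
    and invA: "\<And>y. y \<in> W \<Longrightarrow> A *v y \<in> W" and invB: "\<And>y. y \<in> W \<Longrightarrow> B *v y \<in> W"
  obtains v where "v \<in> W" "norm v = 1"
    "A *v v = (v \<bullet> (A *v v)) *\<^sub>R v" "B *v v = (v \<bullet> (B *v v)) *\<^sub>R v"
proof -
  obtain u where u: "u \<in> W" "norm u = 1" and Au: "A *v u = (u \<bullet> (A *v u)) *\<^sub>R u"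
    using symmetric_eigenvector_in_invariant_subspace[OF symA W x invA] by blast
  define E where "E = W \<inter> {y. A *v y = (u \<bullet> (A *v u)) *\<^sub>R y}"
  have "subspace E" unfolding E_def by (intro subspace_inter W subspace_eigenspace)
  moreover have "u \<in> E" "u \<noteq> 0" using u Au by (auto simp: E_def)
  moreover have "B *v y \<in> E" if "y \<in> E" for y
  proof -
    have "A *v (B *v y) = B *v (A *v y)" using comm by (simp add: matrix_vector_mul_assoc)
    with that invB show ?thesis by (simp add: E_def matrix_vector_mult_scaleR)
  qed
  ultimately obtain v where v: "v \<in> E" "norm v = 1" and Bv: "B *v v = (v \<bullet> (B *v v)) *\<^sub>R v"
    using symmetric_eigenvector_in_invariant_subspace[OF symB] by metis
  then have "A *v v = (v \<bullet> (A *v v)) *\<^sub>R v"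
    by (simp add: E_def inner_commute norm_eq_1)
  with v Bv that show ?thesis by (auto simp: E_def)
qed

lemma symmetric_preserves_orthogonal_complement_of_eigenvector:
  assumes "transpose M = M" "M *v v = c *\<^sub>R v" "x \<bullet> v = 0"
  shows "(M *v x) \<bullet> (v::real^'n) = 0"
  using assms symmetric_inner_swap[of M x v] by simp

lemma orthogonal_to_orthonormal_pair_eq_cross3:
  fixes a b x :: "real^3"
  assumes "x \<bullet> a = 0" "x \<bullet> b = 0" "a \<bullet> a = 1" "b \<bullet> b = 1" "a \<bullet> b = 0"
  shows "x = (x \<bullet> cross3 a b) *\<^sub>R cross3 a b"
proof -
  have "cross3 (cross3 a b) x = (a \<bullet> x) *\<^sub>R b - (b \<bullet> x) *\<^sub>R a"
    by (simp add: cross3_simps forall_3)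
  then have "cross3 (cross3 a b) x = 0"
    using assms by (simp add: inner_commute)
  moreover have "cross3 (cross3 a b) (cross3 (cross3 a b) x)
      = ((cross3 a b) \<bullet> x) *\<^sub>R cross3 a b - ((a \<bullet> a) * (b \<bullet> b) - (a \<bullet> b)\<^sup>2) *\<^sub>R x"
    by (simp add: cross3_simps forall_3 power2_eq_square)
  ultimately show ?thesis using assms by (simp add: inner_commute)
qed

lemma exists_nonzero_orthogonal: "\<exists>x::real^3. x \<noteq> 0 \<and> x \<bullet> v = 0"
proof (cases "v$1 = 0 \<and> v$2 = 0")
  case True
  then show ?thesis
    by (intro exI[of _ "axis 1 1"]) (auto simp: inner_vec_def sum_3 axis_def vec_eq_iff)
next
  case False
  then show ?thesis
    by (intro exI[of _ "vector [-(v$2), v$1, 0]"]) (auto simp: inner_vec_def sum_3 vec_eq_iff forall_3 vector_def)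
qed

definition cross3_frame :: "real^3 \<Rightarrow> real^3 \<Rightarrow> mat3" where
  "cross3_frame u v = (\<chi> i j. (if j = 1 then u else if j = 2 then v else cross3 u v) $ i)"

lemma column_cross3_frame:
  "column 1 (cross3_frame u v) = u" "column 2 (cross3_frame u v) = v"
  "column 3 (cross3_frame u v) = cross3 u v"
  by (simp_all add: cross3_frame_def column_def vec_eq_iff)

lemma cross3_orthonormal:
  assumes "u \<bullet> u = 1" "v \<bullet> v = 1" "u \<bullet> v = 0"
  shows "cross3 u v \<bullet> cross3 u v = 1" "u \<bullet> cross3 u v = 0" "v \<bullet> cross3 u v = 0"
  using norm_cross_dot[of u v] assms dot_cross_self[of u v]
  by (simp_all add: power2_norm_eq_inner[symmetric] inner_commute power_mult_distrib)

lemma orthogonal_matrix_cross3_frame: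
  assumes "u \<bullet> u = 1" "v \<bullet> v = 1" "u \<bullet> v = 0"
  shows "orthogonal_matrix (cross3_frame u v)"
  unfolding orthogonal_matrix_orthonormal_columns orthogonal_def norm_eq_1
  using assms cross3_orthonormal[OF assms] by (auto simp: forall_3 column_cross3_frame inner_commute)

lemma symmetric_diagonal_in_cross3_frame:
  assumes uv: "u \<bullet> u = 1" "v \<bullet> v = 1" "u \<bullet> v = 0"
    and M: "transpose M = M" "M *v u = a *\<^sub>R u" "M *v v = b *\<^sub>R v"
  shows "M = orth_conj (cross3_frame u v)
           (diag_mat (vector [a, b, cross3 u v \<bullet> (M *v cross3 u v)]))"
proof (rule eq_orth_conj_diag_mat_if_eigenvectors[OF orthogonal_matrix_cross3_frame[OF uv]])
  note w = cross3_orthonormal[OF uv]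
  have "(M *v cross3 u v) \<bullet> u = 0" "(M *v cross3 u v) \<bullet> v = 0"
    using symmetric_preserves_orthogonal_complement_of_eigenvector[OF M(1)] M w
    by (simp_all add: inner_commute)
  then have "M *v cross3 u v = (cross3 u v \<bullet> (M *v cross3 u v)) *\<^sub>R cross3 u v"
    using orthogonal_to_orthonormal_pair_eq_cross3[OF _ _ uv] by (metis inner_commute)
  then show "M *v column j (cross3_frame u v)
      = vector [a, b, cross3 u v \<bullet> (M *v cross3 u v)] $ j *\<^sub>R column j (cross3_frame u v)" for j
    using M exhaust_3[of j] by (auto simp: column_cross3_frame vector_3)
qed

lemma commuting_symmetric_simultaneously_diagonalizable:
  fixes A B :: mat3
  assumes symA: "transpose A = A" and symB: "transpose B = B" and comm: "A ** B = B ** A"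
  obtains P a b where "orthogonal_matrix P" "A = orth_conj P (diag_mat a)" "B = orth_conj P (diag_mat b)"
proof -
  note common = commuting_symmetric_common_eigenvector[OF symA symB comm]
  obtain u where "norm u = 1" and Au: "A *v u = (u \<bullet> (A *v u)) *\<^sub>R u"
    and Bu: "B *v u = (u \<bullet> (B *v u)) *\<^sub>R u"
    using common[OF subspace_UNIV, of "axis 1 1"] by (auto simp: axis_eq_0_iff)
  define W where "W = {x. x \<bullet> u = 0}"
  have W: "subspace W" by (auto simp: W_def subspace_def inner_add_left)
  obtain x where "x \<in> W" "x \<noteq> 0" using exists_nonzero_orthogonal[of u] by (auto simp: W_def)
  moreover have "A *v y \<in> W" "B *v y \<in> W" if "y \<in> W" for y
    using that symmetric_preserves_orthogonal_complement_of_eigenvector[OF symA Au]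
      symmetric_preserves_orthogonal_complement_of_eigenvector[OF symB Bu] by (simp_all add: W_def)
  ultimately obtain v where "v \<in> W" "norm v = 1" and Av: "A *v v = (v \<bullet> (A *v v)) *\<^sub>R v"
    and Bv: "B *v v = (v \<bullet> (B *v v)) *\<^sub>R v"
    using common[OF W] by blast
  have uv: "u \<bullet> u = 1" "v \<bullet> v = 1" "u \<bullet> v = 0"
    using \<open>norm u = 1\<close> \<open>norm v = 1\<close> \<open>v \<in> W\<close> by (auto simp: norm_eq_1 W_def inner_commute)
  show ?thesis
    using that orthogonal_matrix_cross3_frame[OF uv]
      symmetric_diagonal_in_cross3_frame[OF uv symA Au Av]
      symmetric_diagonal_in_cross3_frame[OF uv symB Bu Bv] .
qed

lemma symmetric_orth_diagonalizable:
  fixes A :: mat3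
  assumes "transpose A = A"
  obtains P x where "orthogonal_matrix P" "A = orth_conj P (diag_mat x)"
  using commuting_symmetric_simultaneously_diagonalizable[OF assms assms refl] by blast

section \<open>The exponential and the logarithm\<close>

lemma matpow_orth_conj_diag_mat:
  "orthogonal_matrix P \<Longrightarrow> matpow (orth_conj P (diag_mat x)) n = orth_conj P (diag_mat (vec_map (\<lambda>t. t ^ n) x))"
proof (induction n)
  case 0
  then show ?case by (simp add: vec_map_def diag_mat_one[unfolded one_vec_def] orth_conj_mat_one)
next
  case (Suc n)
  then show ?case
    by (simp add: orth_conj_mult[symmetric] diag_mat_mult_diag_mat times_vec_def vec_map_def)
qed

lemma sums_vec_lambda:
  assumes "\<And>i. (\<lambda>n. f n i) sums s i"
  shows "(\<lambda>n. \<chi> i. f n i) sums (\<chi> i. s i)"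
proof -
  have "(\<lambda>N. \<Sum>n<N. \<chi> i. f n i) = (\<lambda>N. \<chi> i. \<Sum>n<N. f n i)"
    by (rule ext) (simp add: vec_eq_iff sum_component)
  moreover have "(\<lambda>N. \<chi> i. \<Sum>n<N. f n i) \<longlonglongrightarrow> (\<chi> i. s i)"
    using assms by (intro tendsto_vec_lambda) (simp add: sums_def)
  ultimately show ?thesis by (simp add: sums_def)
qed

lemma mexp_orth_conj_diag_mat:
  assumes P: "orthogonal_matrix P"
  shows "mexp (orth_conj P (diag_mat x)) = orth_conj P (diag_mat (vec_map exp x))"
proof -
  have "(\<lambda>n. \<chi> i. x$i ^ n / fact n) sums (\<chi> i. exp (x$i))"
  proof (rule sums_vec_lambda)
    show "(\<lambda>n. x$i ^ n / fact n) sums exp (x$i)" for i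
      using exp_converges[of "x$i"] by (simp add: divide_inverse mult_ac)
  qed
  then have "(\<lambda>n. orth_conj P (diag_mat (\<chi> i. x$i ^ n / fact n))) sums orth_conj P (diag_mat (vec_map exp x))"
    unfolding vec_map_def
    by (intro bounded_linear.sums[OF bounded_linear_orth_conj] bounded_linear.sums[OF bounded_linear_diag_mat])
  moreover have "(1 / fact n) *\<^sub>R matpow (orth_conj P (diag_mat x)) n
      = orth_conj P (diag_mat (\<chi> i. x$i ^ n / fact n))" for n
    by (simp add: matpow_orth_conj_diag_mat[OF P] flip: orth_conj_scaleR diag_mat_scaleR)
      (rule arg_cong[where f = "\<lambda>v. orth_conj P (diag_mat v)"], simp add: vec_eq_iff)
  ultimately show ?thesis by (simp add: mexp_def sums_iff)
qed

lemma mexp_inj_on_symmetric: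
  fixes L1 L2 :: mat3
  assumes "transpose L1 = L1" "transpose L2 = L2" "mexp L1 = mexp L2"
  shows "L1 = L2"
proof -
  obtain P x where P: "orthogonal_matrix P" and L1: "L1 = orth_conj P (diag_mat x)"
    using symmetric_orth_diagonalizable[OF assms(1)] .
  obtain R y where R: "orthogonal_matrix R" and L2: "L2 = orth_conj R (diag_mat y)"
    using symmetric_orth_diagonalizable[OF assms(2)] .
  have exp_eq: "orth_conj P (diag_mat (vec_map exp x)) = orth_conj R (diag_mat (vec_map exp y))"
    using assms(3) by (simp add: L1 L2 mexp_orth_conj_diag_mat P R)
  \<comment> \<open>The columns of \<open>R\<close> are eigenvectors of \<open>exp L1\<close>, hence (applying \<open>ln\<close>) of \<open>L1\<close>.\<close>
  have "L1 *v column j R = y$j *\<^sub>R column j R" for j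
  proof -
    have "orth_conj P (diag_mat (vec_map exp x)) *v column j R = exp (y$j) *\<^sub>R column j R"
      unfolding exp_eq using orth_conj_diag_mat_column[OF R, of "vec_map exp y"] by simp
    from orth_conj_diag_mat_eigenvector_vec_map[OF P this, of ln] show ?thesis
      by (simp add: L1 vec_map_ident)
  qed
  then show ?thesis
    using eq_orth_conj_diag_mat_if_eigenvectors[OF R] L2 by simp
qed

lemma mlog_mexp: "transpose L = L \<Longrightarrow> mlog (mexp L) = L"
  unfolding mlog_def Sym3_def by (rule the_equality) (auto intro: mexp_inj_on_symmetric)

lemma mlog_orth_conj_diag_mat:
  assumes "orthogonal_matrix P" "\<And>i. d$i > 0"
  shows "mlog (orth_conj P (diag_mat d)) = orth_conj P (diag_mat (vec_map ln d))"
proof -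
  have "orth_conj P (diag_mat d) = mexp (orth_conj P (diag_mat (vec_map ln d)))"
    using assms by (simp add: mexp_orth_conj_diag_mat vec_map_ident)
  then show ?thesis by (simp add: mlog_mexp)
qed

lemma orth_conj_diag_mat_in_PSym3_iff:
  assumes P: "orthogonal_matrix P"
  shows "orth_conj P (diag_mat d) \<in> PSym3 \<longleftrightarrow> (\<forall>i. d$i > 0)"
proof
  assume U: "orth_conj P (diag_mat d) \<in> PSym3"
  show "\<forall>i. d$i > 0"
  proof
    fix j
    have "norm (column j P) = 1"
      using P by (simp add: orthogonal_matrix_orthonormal_columns)
    then have "column j P \<bullet> column j P = 1" "column j P \<noteq> 0"
      by (auto simp: norm_eq_1)
    with U show "d$j > 0"
      by (auto simp: PSym3_def orth_conj_diag_mat_column[OF P] dest!: spec[of _ "column j P"])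
  qed
next
  assume d: "\<forall>i. d$i > 0"
  have "x \<bullet> (orth_conj P (diag_mat d) *v x) > 0" if x: "x \<noteq> 0" for x
  proof -
    define c where "c = transpose P *v x"
    have "c \<noteq> 0"
      using x quadratic_form_orth_conj_diag_mat(2)[OF P, of x] by (metis c_def norm_eq_zero)
    then obtain k where "c$k \<noteq> 0" by (auto simp: vec_eq_iff)
    then have "0 < (\<Sum>i\<in>UNIV. d$i * (c$i)\<^sup>2)"
      using d by (intro sum_pos2[of UNIV k]) (auto simp: less_imp_le)
    then show ?thesis
      by (simp add: quadratic_form_orth_conj_diag_mat(1)[OF P] c_def)
  qed
  then show "orth_conj P (diag_mat d) \<in> PSym3"
    by (simp add: PSym3_def)
qed

lemma PSym3_orth_diagonalizable:
  assumes "U \<in> PSym3"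
  obtains P d where "orthogonal_matrix P" "\<And>i. d$i > 0" "U = orth_conj P (diag_mat d)"
proof -
  obtain P d where "orthogonal_matrix P" "U = orth_conj P (diag_mat d)"
    using symmetric_orth_diagonalizable assms by (auto simp: PSym3_def)
  with assms that show ?thesis by (metis orth_conj_diag_mat_in_PSym3_iff)
qed

lemma mexp_mlog:
  assumes "U \<in> PSym3"
  shows "mexp (mlog U) = U"
proof -
  obtain P d where P: "orthogonal_matrix P" and "\<And>i. d$i > 0" and "U = orth_conj P (diag_mat d)"
    using PSym3_orth_diagonalizable[OF assms] by blast
  then show ?thesis
    by (simp add: mlog_orth_conj_diag_mat[OF P] mexp_orth_conj_diag_mat[OF P] vec_map_ident)
qed

lemma mlog_orth_conj:
  assumes "orthogonal_matrix Q" "U \<in> PSym3"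
  shows "orth_conj Q U \<in> PSym3" "mlog (orth_conj Q U) = orth_conj Q (mlog U)"
proof -
  obtain P d where P: "orthogonal_matrix P" and d: "\<And>i. d$i > 0" and U: "U = orth_conj P (diag_mat d)"
    using PSym3_orth_diagonalizable[OF assms(2)] by blast
  have QP: "orthogonal_matrix (Q ** P)" using assms(1) P by (rule orthogonal_matrix_mul)
  show "orth_conj Q U \<in> PSym3"
    using orth_conj_diag_mat_in_PSym3_iff[OF QP] d by (simp add: U orth_conj_orth_conj)
  show "mlog (orth_conj Q U) = orth_conj Q (mlog U)"
    using mlog_orth_conj_diag_mat[OF QP d] mlog_orth_conj_diag_mat[OF P d]
    by (simp add: U orth_conj_orth_conj)
qed

lemma mlog_mult_coaxial:
  assumes "U1 \<in> PSym3" "U2 \<in> PSym3" "coaxial U1 U2"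
  shows "U1 ** U2 \<in> PSym3" "mlog (U1 ** U2) = mlog U1 + mlog U2"
proof -
  obtain P a b where P: "orthogonal_matrix P"
    and U1: "U1 = orth_conj P (diag_mat a)" and U2: "U2 = orth_conj P (diag_mat b)"
    using commuting_symmetric_simultaneously_diagonalizable[of U1 U2] assms
    by (auto simp: PSym3_def coaxial_def)
  have a: "\<And>i. a$i > 0" and b: "\<And>i. b$i > 0"
    using assms(1,2) orth_conj_diag_mat_in_PSym3_iff[OF P] by (auto simp: U1 U2)
  have U12: "U1 ** U2 = orth_conj P (diag_mat (a * b))"
    by (simp add: U1 U2 orth_conj_mult[OF P, symmetric] diag_mat_mult_diag_mat)
  show "U1 ** U2 \<in> PSym3"
    using a b by (simp add: U12 orth_conj_diag_mat_in_PSym3_iff[OF P])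
  have "mlog (U1 ** U2) = orth_conj P (diag_mat (vec_map ln (a * b)))"
    using a b by (simp add: U12 mlog_orth_conj_diag_mat[OF P])
  also have "vec_map ln (a * b) = vec_map ln a + vec_map ln b"
    using a b by (simp add: vec_eq_iff ln_mult_pos)
  finally show "mlog (U1 ** U2) = mlog U1 + mlog U2"
    using a b by (simp add: U1 U2 mlog_orth_conj_diag_mat[OF P] orth_conj_add diag_mat_add)
qed

lemma diag_mat_in_PSym3_iff: "diag_mat d \<in> PSym3 \<longleftrightarrow> (\<forall>i. d$i > 0)"
  using orth_conj_diag_mat_in_PSym3_iff[OF orthogonal_matrix_id] by (simp add: orth_conj_id)

lemma mlog_diag_mat: "(\<And>i. d$i > 0) \<Longrightarrow> mlog (diag_mat d) = diag_mat (vec_map ln d)"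
  using mlog_orth_conj_diag_mat[OF orthogonal_matrix_id] by (simp add: orth_conj_id)

lemma diag3_shear_in_PSym3: "\<alpha> > 0 \<Longrightarrow> diag3 \<alpha> (1 / \<alpha>) 1 \<in> PSym3"
  by (simp add: diag3_eq_diag_mat diag_mat_in_PSym3_iff forall_3 vector_3)

lemma scaleR_mat_one_in_PSym3: "l > 0 \<Longrightarrow> l *\<^sub>R mat 1 \<in> PSym3"
  by (simp add: scaleR_mat_one_eq_diag_mat diag_mat_in_PSym3_iff)

lemma mlog_scaleR_mat_one: "l > 0 \<Longrightarrow> mlog (l *\<^sub>R mat 1) = ln l *\<^sub>R mat 1"
  by (simp add: scaleR_mat_one_eq_diag_mat mlog_diag_mat vec_map_def)

lemma mat_one_in_PSym3: "mat 1 \<in> PSym3"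
  using scaleR_mat_one_in_PSym3[of 1] by simp

lemma mlog_mat_one: "mlog (mat 1) = 0"
  using mlog_scaleR_mat_one[of 1] by simp

section \<open>Continuity of the logarithm\<close>

lemma norm_matrix_vector_mult_le: "norm (A *v x) \<le> norm A * norm (x::real^'n)"
  for A :: "real^'n^'m"
proof -
  have "norm (A *v x) = L2_set (\<lambda>i. \<bar>A$i \<bullet> x\<bar>) UNIV"
    by (simp add: norm_vec_def matrix_mult_dot)
  also have "\<dots> \<le> L2_set (\<lambda>i. norm x * norm (A$i)) UNIV"
    by (rule L2_set_mono) (metis Cauchy_Schwarz_ineq2 mult.commute, simp)
  also have "\<dots> = norm A * norm x"
    by (simp add: norm_vec_def L2_set_right_distrib[symmetric] mult.commute)
  finally show ?thesis .
qed

lemma abs_quadratic_form_le_norm: "norm p = 1 \<Longrightarrow> \<bar>p \<bullet> (A *v p)\<bar> \<le> norm (A::real^'n^'n)"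
  using Cauchy_Schwarz_ineq2[of p "A *v p"] norm_matrix_vector_mult_le[of A p] by simp

lemma quadratic_form_orth_conj_diag_mat_ge:
  assumes "orthogonal_matrix Q" "\<And>i. m \<le> d$i" "norm p = 1"
  shows "m \<le> p \<bullet> (orth_conj Q (diag_mat d) *v p)"
proof -
  define c where "c = transpose Q *v p"
  have "(\<Sum>i\<in>UNIV. (c$i)\<^sup>2) = 1"
    using quadratic_form_orth_conj_diag_mat(2)[OF assms(1), of p] assms(3)
    by (simp add: c_def norm_vec_def L2_set_def)
  then have "m = (\<Sum>i\<in>UNIV. m * (c$i)\<^sup>2)" by (simp flip: sum_distrib_left)
  also have "\<dots> \<le> (\<Sum>i\<in>UNIV. d$i * (c$i)\<^sup>2)"
    by (intro sum_mono mult_right_mono assms(2)) simp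
  also have "\<dots> = p \<bullet> (orth_conj Q (diag_mat d) *v p)"
    by (simp add: quadratic_form_orth_conj_diag_mat(1)[OF assms(1)] c_def)
  finally show ?thesis .
qed

lemma compact_orthogonal_matrices: "compact {P :: real^'n^'n. orthogonal_matrix P}"
proof -
  have "closed {P :: real^'n^'n. transpose P ** P = mat 1}"
    unfolding matrix_matrix_mult_def transpose_def
    by (intro closed_Collect_eq continuous_intros continuous_on_component)
  moreover have "norm P \<le> real CARD('n)" if "orthogonal_matrix P" for P :: "real^'n^'n"
  proof -
    have "norm (P$i) = 1" for i
      using that by (simp add: orthogonal_matrix_orthonormal_rows row_def)
    then have "L2_set (\<lambda>i. norm (P$i)) UNIV \<le> (\<Sum>i\<in>UNIV. norm (P$i))"
      by (intro L2_set_le_sum) simp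
    with \<open>\<And>i. norm (P$i) = 1\<close> show ?thesis by (simp add: norm_vec_def)
  qed
  ultimately show ?thesis
    by (auto simp: compact_eq_bounded_closed bounded_iff orthogonal_matrix)
qed

lemma continuous_on_compact_factorization:
  fixes \<phi> :: "'a::topological_space \<Rightarrow> 'b::euclidean_space" and \<psi> :: "'a \<Rightarrow> 'c::euclidean_space"
  assumes K: "compact K" and \<phi>: "continuous_on K \<phi>" and \<psi>: "continuous_on K \<psi>"
    and g: "\<And>z. z \<in> K \<Longrightarrow> g (\<phi> z) = \<psi> z"
  shows "continuous_on (\<phi> ` K) g"
proof (rule continuous_from_closed_graph)
  show "compact (\<psi> ` K)" using \<psi> K by (rule compact_continuous_image)
  show "g \<in> \<phi> ` K \<rightarrow> \<psi> ` K" using g by auto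
  have "(\<lambda>x. (x, g x)) ` \<phi> ` K = (\<lambda>z. (\<phi> z, \<psi> z)) ` K"
    using g by (force simp: image_image)
  moreover have "compact ((\<lambda>z. (\<phi> z, \<psi> z)) ` K)"
    using K \<phi> \<psi> by (intro compact_continuous_image continuous_on_Pair)
  ultimately show "closed ((\<lambda>x. (x, g x)) ` \<phi> ` K)"
    by (simp add: compact_imp_closed)
qed

lemma eigenvalue_close_to_quadratic_form:
  assumes "orthogonal_matrix P"
  shows "\<bar>d$j - column j P \<bullet> (M *v column j P)\<bar> \<le> norm (orth_conj P (diag_mat d) - M)"
proof -
  define p where "p = column j P"
  have "norm p = 1" using assms by (simp add: p_def orthogonal_matrix_orthonormal_columns)
  then have "d$j = p \<bullet> (orth_conj P (diag_mat d) *v p)"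
    using orth_conj_diag_mat_column[OF assms] by (simp add: p_def norm_eq_1)
  then have "d$j - p \<bullet> (M *v p) = p \<bullet> ((orth_conj P (diag_mat d) - M) *v p)"
    by (simp add: matrix_vector_mult_diff_rdistrib inner_diff_right)
  with \<open>norm p = 1\<close> show ?thesis
    by (simp add: abs_quadratic_form_le_norm p_def)
qed

definition PSym3_log_bounded :: "real \<Rightarrow> mat3 set" where
  "PSym3_log_bounded R = (\<lambda>(P, x). orth_conj P (diag_mat (vec_map exp x))) `
     ({P. orthogonal_matrix P} \<times> cbox (- (\<chi> i. R)) (\<chi> i. R))"

lemma continuous_on_mlog_PSym3_log_bounded: "continuous_on (PSym3_log_bounded R) mlog"
  unfolding PSym3_log_bounded_def
proof (rule continuous_on_compact_factorization)
  show "compact ({P :: mat3. orthogonal_matrix P} \<times> cbox (- (\<chi> i. R)) (\<chi> i. R :: real^3))"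
    by (intro compact_Times compact_orthogonal_matrices compact_cbox)
  show "continuous_on S (\<lambda>(P, x). orth_conj P (diag_mat (vec_map exp x)))"
    and "continuous_on S (\<lambda>(P, x). orth_conj P (diag_mat x))" for S :: "(mat3 \<times> (real^3)) set"
    by (simp_all add: case_prod_beta') (intro continuous_intros)+
  show "mlog ((\<lambda>(P, x). orth_conj P (diag_mat (vec_map exp x))) z) = (\<lambda>(P, x). orth_conj P (diag_mat x)) z"
    if "z \<in> {P. orthogonal_matrix P} \<times> cbox (- (\<chi> i. R)) (\<chi> i. R)" for z
    using that by (auto simp: mlog_orth_conj_diag_mat vec_map_ident)
qed

lemma PSym3_locally_log_bounded:
  assumes "U0 \<in> PSym3"
  obtains e R where "e > 0" "\<And>U. U \<in> PSym3 \<Longrightarrow> dist U U0 < e \<Longrightarrow> U \<in> PSym3_log_bounded R"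
proof -
  obtain Q d0 where Q: "orthogonal_matrix Q" and d0: "\<And>i. d0$i > 0" and U0: "U0 = orth_conj Q (diag_mat d0)"
    using PSym3_orth_diagonalizable[OF assms] by blast
  define m where "m = Min (range (($) d0))"
  have m: "m > 0" "\<And>i. m \<le> d0$i"
    using d0 by (auto simp: m_def)
  define R where "R = \<bar>ln (m / 2)\<bar> + \<bar>ln (norm U0 + m / 2)\<bar>"
  have "U \<in> PSym3_log_bounded R" if "U \<in> PSym3" "dist U U0 < m / 2" for U
  proof -
    obtain P d where P: "orthogonal_matrix P" and d: "\<And>i. d$i > 0" and U: "U = orth_conj P (diag_mat d)"
      using PSym3_orth_diagonalizable[OF \<open>U \<in> PSym3\<close>] by blast
    \<comment> \<open>Each eigenvalue of \<open>U\<close> is within \<open>m/2\<close> of a value of the quadratic form of \<open>U0\<close> on the unit sphere.\<close>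
    have "\<bar>ln (d$j)\<bar> \<le> R" for j
    proof -
      define q where "q = column j P \<bullet> (U0 *v column j P)"
      have unit: "norm (column j P) = 1"
        using P by (simp add: orthogonal_matrix_orthonormal_columns)
      have "\<bar>d$j - q\<bar> < m / 2"
        using eigenvalue_close_to_quadratic_form[OF P, of d j U0] \<open>dist U U0 < m / 2\<close>
        by (simp add: q_def U dist_norm)
      moreover have "m \<le> q"
        unfolding q_def U0 using Q m(2) unit by (rule quadratic_form_orth_conj_diag_mat_ge)
      moreover have "q \<le> norm U0"
        using abs_quadratic_form_le_norm[OF unit, of U0] by (simp add: q_def)
      ultimately have "m / 2 \<le> d$j" "d$j \<le> norm U0 + m / 2" by linarith+
      then have "ln (m / 2) \<le> ln (d$j)" "ln (d$j) \<le> ln (norm U0 + m / 2)"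
        using m(1) d[of j] by simp_all
      then show ?thesis
        unfolding R_def by linarith
    qed
    then have "vec_map ln d \<in> cbox (- (\<chi> i. R)) (\<chi> i. R)"
      by (auto simp: mem_box_cart abs_le_iff minus_le_iff)
    moreover have "U = orth_conj P (diag_mat (vec_map exp (vec_map ln d)))"
      using d by (simp add: U vec_map_ident)
    ultimately show ?thesis
      using P unfolding PSym3_log_bounded_def by (intro image_eqI[of _ _ "(P, vec_map ln d)"]) auto
  qed
  with m(1) show ?thesis using that[of "m / 2" R] by simp
qed

lemma continuous_on_mlog: "continuous_on PSym3 mlog"
proof (rule continuous_on_eq_continuous_within[THEN iffD2], rule ballI)
  fix U0 assume "U0 \<in> PSym3"
  then obtain e R where e: "e > 0" and near: "\<And>U. U \<in> PSym3 \<Longrightarrow> dist U U0 < e \<Longrightarrow> U \<in> PSym3_log_bounded R"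
    using PSym3_locally_log_bounded by blast
  have "PSym3 \<inter> ball U0 e \<subseteq> PSym3_log_bounded R"
    using near by (auto simp: dist_commute)
  moreover have "U0 \<in> PSym3_log_bounded R"
    using near \<open>U0 \<in> PSym3\<close> e by simp
  ultimately have "continuous (at U0 within PSym3 \<inter> ball U0 e) mlog"
    using continuous_on_mlog_PSym3_log_bounded[of R]
    by (meson continuous_on_eq_continuous_within continuous_within_subset)
  moreover have "at U0 within PSym3 \<inter> ball U0 e = at U0 within PSym3"
    using e by (intro at_within_nhd[of _ "ball U0 e"]) auto
  ultimately show "continuous (at U0 within PSym3) mlog"
    by (simp add: continuous_within)
qed

section \<open>The Hencky law satisfies the axioms\<close>

definition lame :: "real \<Rightarrow> real \<Rightarrow> mat3 \<Rightarrow> mat3" where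
  "lame G La L = (2 * G) *\<^sub>R L + (La * trace L) *\<^sub>R mat 1"

lemma trace_lame: "trace (lame G La L) = (2 * G + 3 * La) * trace L"
  by (simp add: lame_def trace_add trace_scaleR trace_I algebra_simps)

lemma lame_inj:
  assumes "G \<noteq> 0" "3 * La + 2 * G \<noteq> 0" "lame G La L1 = lame G La L2"
  shows "L1 = L2"
proof -
  have "trace L1 = trace L2"
    using trace_lame[of G La] assms(2,3) by (metis add.commute mult_cancel_left)
  then have "(2 * G) *\<^sub>R L1 = (2 * G) *\<^sub>R L2"
    using assms(3) by (simp add: lame_def)
  with assms(1) show ?thesis by simp
qed

lemma lame_add: "lame G La (L1 + L2) = lame G La L1 + lame G La L2"
  by (simp add: lame_def trace_add scaleR_add_right scaleR_add_left distrib_left)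

lemma lame_orth_conj: "orthogonal_matrix Q \<Longrightarrow> lame G La (orth_conj Q L) = orth_conj Q (lame G La L)"
  by (simp add: lame_def trace_orth_conj orth_conj_add orth_conj_scaleR orth_conj_mat_one)

lemma lame_mlog_diag3_shear:
  assumes "\<alpha> > 0"
  shows "lame G La (mlog (diag3 \<alpha> (1 / \<alpha>) 1)) = diag3 (2 * G * ln \<alpha>) (- (2 * G * ln \<alpha>)) 0"
proof -
  have "\<forall>i. (vector [\<alpha>, 1 / \<alpha>, 1] :: real^3) $ i > 0"
    using assms by (simp add: forall_3 vector_3)
  then have "mlog (diag3 \<alpha> (1 / \<alpha>) 1) = diag_mat (vec_map ln (vector [\<alpha>, 1 / \<alpha>, 1]))"
    by (simp add: diag3_eq_diag_mat mlog_diag_mat)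
  also have "vec_map ln (vector [\<alpha>, 1 / \<alpha>, 1]) = (vector [ln \<alpha>, - ln \<alpha>, 0] :: real^3)"
    using assms by (simp add: vec_eq_iff forall_3 vector_3 ln_div)
  finally show ?thesis
    by (simp add: lame_def diag3_eq_diag_mat trace_diag_mat sum_3 vector_3 flip: diag_mat_scaleR)
      (simp add: vec_eq_iff forall_3 vector_3)
qed

lemma lame_mlog_scaleR_mat_one:
  "l > 0 \<Longrightarrow> lame G La (mlog (l *\<^sub>R mat 1)) = ((2 * G + 3 * La) * ln l) *\<^sub>R mat 1"
  by (simp add: mlog_scaleR_mat_one lame_def trace_scaleR trace_I algebra_simps flip: scaleR_add_left)

lemma axioms_T_lame_mlog:
  fixes T :: "mat3 \<Rightarrow> mat3"
  assumes G: "G \<noteq> 0" and GLa: "3 * La + 2 * G \<noteq> 0"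
    and T: "\<And>U. U \<in> PSym3 \<Longrightarrow> T U = lame G La (mlog U)"
  shows "axioms_T T"
  unfolding axioms_T_def
proof (intro conjI ballI allI impI)
  have inj: "U = D \<longleftrightarrow> T U = T D" if "U \<in> PSym3" "D \<in> PSym3" for U D
    using that lame_inj[OF G GLa] mexp_mlog T by metis
  show "continuous_on PSym3 T"
  proof (rule continuous_on_eq)
    show "continuous_on PSym3 (\<lambda>U. lame G La (mlog U))"
      unfolding lame_def trace_def by (intro continuous_intros continuous_on_component continuous_on_mlog)
  qed (simp add: T)
  show "T U = 0 \<longleftrightarrow> U = mat 1" if "U \<in> PSym3" for U
    using inj[OF that mat_one_in_PSym3]
    by (simp add: T mat_one_in_PSym3 mlog_mat_one lame_def trace_0[unfolded mat_0])
  show "\<exists>s. \<forall>U\<in>PSym3. U = diag3 \<alpha> (1 / \<alpha>) 1 \<longleftrightarrow> T U = diag3 s (- s) 0" if "\<alpha> > 0" for \<alpha>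
    using inj[OF _ diag3_shear_in_PSym3[OF that]] that
    by (intro exI[of _ "2 * G * ln \<alpha>"]) (simp add: T diag3_shear_in_PSym3 lame_mlog_diag3_shear)
  show "\<exists>a. \<forall>U\<in>PSym3. U = l *\<^sub>R mat 1 \<longleftrightarrow> T U = a *\<^sub>R mat 1" if "l > 0" for l
    using inj[OF _ scaleR_mat_one_in_PSym3[OF that]] that
    by (intro exI[of _ "(2 * G + 3 * La) * ln l"]) (simp add: T scaleR_mat_one_in_PSym3 lame_mlog_scaleR_mat_one)
next
  fix Q U :: mat3 assume "orthogonal_matrix Q" "U \<in> PSym3"
  then have Q: "orthogonal_matrix (transpose Q)" by simp
  show "T (transpose Q ** U ** Q) = transpose Q ** T U ** Q"
    using mlog_orth_conj[OF Q \<open>U \<in> PSym3\<close>] lame_orth_conj[OF Q] \<open>U \<in> PSym3\<close>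
    by (simp add: T orth_conj_def)
next
  fix U1 U2 assume "U1 \<in> PSym3" "U2 \<in> PSym3" "coaxial U1 U2"
  then show "T (U1 ** U2) = T U1 + T U2"
    using mlog_mult_coaxial[of U1 U2] by (simp add: T lame_add)
qed

section \<open>The axioms force the Hencky law\<close>

lemma continuous_additive_real_fun_homogeneous:
  fixes g :: "real \<Rightarrow> 'a::real_normed_vector"
  assumes add: "\<And>s t. g (s + t) = g s + g t" and cont: "continuous_on UNIV g"
  shows "g t = t *\<^sub>R g 1"
proof -
  have g0: "g 0 = 0" using add[of 0 0] by simp
  have nat: "g (of_nat n * s) = of_nat n *\<^sub>R g s" for n s
    by (induction n) (simp_all add: g0 add distrib_right scaleR_add_left)
  have int: "g (of_int n * s) = of_int n *\<^sub>R g s" for n s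
  proof (cases "n \<ge> 0")
    case True then show ?thesis using nat[of "nat n" s] by simp
  next
    case False
    have "g (- s') = - g s'" for s' using add[of "- s'" s'] g0 by (simp add: eq_neg_iff_add_eq_0)
    moreover have "of_int n * s = - (of_nat (nat (- n)) * s)" using False by simp
    ultimately show ?thesis using nat[of "nat (- n)" s] False by simp
  qed
  have "g r = r *\<^sub>R g 1" if rat: "r \<in> \<rat>" for r
  proof -
    obtain a b where b: "b > 0" and r: "r = of_int a / of_int b" using Rats_cases'[OF rat] by metis
    have "of_int b *\<^sub>R g r = g (of_int b * r)" by (simp add: int)
    also have "\<dots> = of_int a *\<^sub>R g 1" using b int[of a 1] by (simp add: r)
    finally have ba: "of_int b *\<^sub>R g r = of_int a *\<^sub>R g 1" .
    have "g r = inverse (of_int b) *\<^sub>R (of_int b *\<^sub>R g r)" using b by simp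
    also have "\<dots> = r *\<^sub>R g 1" by (simp only: ba) (simp add: r divide_inverse mult.commute)
    finally show ?thesis .
  qed
  then have "\<rat> \<subseteq> {t. g t = t *\<^sub>R g 1}" by blast
  moreover have "closed {t. g t = t *\<^sub>R g 1}"
    by (intro closed_Collect_eq cont continuous_intros)
  ultimately have "closure \<rat> \<subseteq> {t. g t = t *\<^sub>R g 1}" by (rule closure_minimal)
  then show ?thesis by (auto simp: Rats_closure_real)
qed

lemma continuous_additive_imp_linear:
  fixes f :: "'a::real_normed_vector \<Rightarrow> 'b::real_normed_vector"
  assumes add: "\<And>x y. f (x + y) = f x + f y" and cont: "continuous_on UNIV f"
  shows "linear f"
proof (rule linearI)
  show "f (r *\<^sub>R x) = r *\<^sub>R f x" for r x
  proof (rule continuous_additive_real_fun_homogeneous[where g = "\<lambda>t. f (t *\<^sub>R x)", simplified])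
    show "f ((s + t) *\<^sub>R x) = f (s *\<^sub>R x) + f (t *\<^sub>R x)" for s t
      by (simp add: scaleR_add_left add)
    show "continuous_on UNIV (\<lambda>t. f (t *\<^sub>R x))"
      by (intro continuous_on_compose2[OF cont] continuous_intros) auto
  qed
qed (rule add)

lemma orthogonal_matrix_diag_mat_sign:
  fixes s :: "real^'n"
  assumes "\<And>i. s$i = 1 \<or> s$i = -1"
  shows "orthogonal_matrix (diag_mat s)"
proof -
  have "s$i * s$i = 1" for i
    using assms[of i] by auto
  then have "s * s = 1"
    by (simp add: vec_eq_iff)
  then show ?thesis
    by (simp add: orthogonal_matrix diag_mat_mult_diag_mat diag_mat_one)
qed

lemma diag_if_invariant_under_sign_changes:
  fixes M :: "real^'n^'n"
  assumes "\<And>s. (\<And>i. s$i = 1 \<or> s$i = -1) \<Longrightarrow> orth_conj (diag_mat s) M = M"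
  shows "M = diag_mat (\<chi> i. M$i$i)"
proof -
  have "M$i$j = 0" if "i \<noteq> j" for i j
  proof -
    define s :: "real^'n" where "s = (\<chi> k. if k = i then -1 else 1)"
    have "orth_conj (diag_mat s) M $ i $ j = M $ i $ j"
      using assms[of s] by (simp add: s_def)
    then have "- M$i$j = M$i$j"
      using that by (simp add: orth_conj_def diag_mat_sandwich_nth s_def)
    then show ?thesis by simp
  qed
  then show ?thesis by (simp add: vec_eq_iff)
qed

definition perm_mat :: "('n \<Rightarrow> 'n) \<Rightarrow> real^'n^'n" where
  "perm_mat \<tau> = (\<chi> k i. if k = \<tau> i then 1 else 0)"

lemma perm_mat_sandwich_nth: "(transpose (perm_mat \<tau>) ** M ** perm_mat \<tau>) $ i $ j = M $ \<tau> i $ \<tau> j"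
  by (simp add: matrix_matrix_mult_def transpose_def perm_mat_def if_zero_mult mult_if_zero sum.delta')

lemma orthogonal_matrix_perm_mat:
  assumes "inj \<tau>"
  shows "orthogonal_matrix (perm_mat \<tau>)"
proof -
  have "transpose (perm_mat \<tau>) ** mat 1 ** perm_mat \<tau> = mat 1"
    using assms by (simp add: vec_eq_iff perm_mat_sandwich_nth mat_def inj_eq)
  then show ?thesis by (simp add: orthogonal_matrix)
qed

lemma perm_mat_sandwich_diag_mat:
  "inj \<tau> \<Longrightarrow> transpose (perm_mat \<tau>) ** diag_mat x ** perm_mat \<tau> = diag_mat (\<chi> i. x $ \<tau> i)"
  by (simp add: vec_eq_iff perm_mat_sandwich_nth inj_eq)

lemma isotropic_response_diag_mat_diagonal:
  assumes iso: "\<And>Q U. orthogonal_matrix Q \<Longrightarrow> U \<in> PSym3 \<Longrightarrow> T (orth_conj Q U) = orth_conj Q (T U)"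
    and d: "\<forall>i. d$i > 0"
  shows "T (diag_mat d) = diag_mat (\<chi> i. T (diag_mat d) $ i $ i)"
proof (rule diag_if_invariant_under_sign_changes)
  fix s :: "real^3" assume s: "\<And>i. s$i = 1 \<or> s$i = -1"
  have "s$i * d$i * s$i = d$i" for i
    using s[of i] by auto
  then have "orth_conj (diag_mat s) (diag_mat d) = diag_mat d"
    by (simp add: orth_conj_def diag_mat_mult_diag_mat vec_eq_iff)
  then show "orth_conj (diag_mat s) (T (diag_mat d)) = T (diag_mat d)"
    using iso[OF orthogonal_matrix_diag_mat_sign[OF s], of "diag_mat d"] d
    by (simp add: diag_mat_in_PSym3_iff)
qed

lemma isotropic_response_diag_mat_permute:
  assumes iso: "\<And>Q U. orthogonal_matrix Q \<Longrightarrow> U \<in> PSym3 \<Longrightarrow> T (orth_conj Q U) = orth_conj Q (T U)"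
    and \<tau>: "inj \<tau>" and d: "\<forall>i. d$i > 0"
  shows "T (diag_mat (\<chi> i. d $ \<tau> i)) $ i $ i = T (diag_mat d) $ \<tau> i $ \<tau> i"
proof -
  have "T (diag_mat (\<chi> i. d $ \<tau> i)) = orth_conj (transpose (perm_mat \<tau>)) (T (diag_mat d))"
    using iso[of "transpose (perm_mat \<tau>)" "diag_mat d"] orthogonal_matrix_perm_mat[OF \<tau>] d
      perm_mat_sandwich_diag_mat[OF \<tau>]
    by (simp add: orth_conj_def diag_mat_in_PSym3_iff)
  then show ?thesis
    by (simp add: orth_conj_def perm_mat_sandwich_nth)
qed

lemma linear_swap_equivariant_vec3:
  fixes F :: "real^3 \<Rightarrow> real^3"
  assumes "linear F"
    and swap: "\<And>p q x i. F (\<chi> j. x $ Transposition.transpose p q j) $ i = F x $ Transposition.transpose p q i"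
  obtains a b where "\<And>x. F x = a *\<^sub>R x + (b * (x$1 + x$2 + x$3)) *\<^sub>R 1"
proof -
  define c where "c = matrix F"
  have F: "F x = c *v x" for x
    using matrix_vector_mul(2)[OF \<open>linear F\<close>] by (metis c_def)
  have c_swap: "c $ Transposition.transpose p q i $ Transposition.transpose p q k = c $ i $ k" for p q i k
  proof -
    have "(\<chi> j. axis (Transposition.transpose p q k) (1::real) $ Transposition.transpose p q j) = axis k 1"
      by (auto simp: vec_eq_iff axis_def transpose_eq_iff)
    then have "F (axis k 1) $ i = F (axis (Transposition.transpose p q k) 1) $ Transposition.transpose p q i"
      by (metis swap)
    then show ?thesis by (simp add: c_def matrix_def)
  qed
  have "c$2$2 = c$1$1" "c$3$3 = c$1$1" "c$2$1 = c$1$2" "c$1$3 = c$1$2" "c$3$1 = c$1$3"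
    "c$2$3 = c$1$3" "c$3$2 = c$2$3"
    using c_swap[of 1 2 1 1] c_swap[of 1 3 1 1] c_swap[of 1 2 1 2] c_swap[of 2 3 1 2]
      c_swap[of 1 3 1 3] c_swap[of 1 2 1 3] c_swap[of 2 3 2 3]
    by simp_all
  then have "F x = (c$1$1 - c$1$2) *\<^sub>R x + (c$1$2 * (x$1 + x$2 + x$3)) *\<^sub>R 1" for x
    by (simp add: F vec_eq_iff forall_3 matrix_vector_mult_def sum_3 algebra_simps)
  then show ?thesis using that by blast
qed

lemma isotropic_additive_response_on_diagonal:
  fixes T :: "mat3 \<Rightarrow> mat3"
  assumes iso: "\<And>Q U. orthogonal_matrix Q \<Longrightarrow> U \<in> PSym3 \<Longrightarrow> T (orth_conj Q U) = orth_conj Q (T U)"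
    and cont: "continuous_on PSym3 T"
    and add: "\<And>U1 U2. U1 \<in> PSym3 \<Longrightarrow> U2 \<in> PSym3 \<Longrightarrow> coaxial U1 U2 \<Longrightarrow> T (U1 ** U2) = T U1 + T U2"
  obtains G La where "\<And>x. T (diag_mat (vec_map exp x)) = lame G La (diag_mat x)"
proof -
  define E where "E x = diag_mat (vec_map exp x)" for x :: "real^3"
  have E: "E x \<in> PSym3" "\<forall>i. vec_map exp x $ i > 0" for x
    by (simp_all add: E_def diag_mat_in_PSym3_iff)
  define F where "F x = (\<chi> i. T (E x) $ i $ i)" for x
  have TE: "T (E x) = diag_mat (F x)" for x
    unfolding F_def E_def by (rule isotropic_response_diag_mat_diagonal[OF iso E(2)])
  have "linear F"
  proof (rule continuous_additive_imp_linear)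
    have "E (x + y) = E x ** E y" "coaxial (E x) (E y)" for x y
      by (simp_all add: E_def coaxial_def diag_mat_mult_diag_mat vec_eq_iff exp_add mult.commute)
    then have "T (E (x + y)) = T (E x) + T (E y)" for x y
      using add[OF E(1) E(1)] by simp
    then show "F (x + y) = F x + F y" for x y
      by (simp add: F_def vec_eq_iff)
    have "continuous_on UNIV (\<lambda>x. T (E x))"
      by (rule continuous_on_compose2[OF cont]) (use E(1) in \<open>auto simp: E_def intro!: continuous_intros\<close>)
    then show "continuous_on UNIV F"
      unfolding F_def by (intro continuous_intros continuous_on_component)
  qed
  moreover have "F (\<chi> j. x $ Transposition.transpose p q j) $ i = F x $ Transposition.transpose p q i"
    for p q x i
  proof -
    have "inj (Transposition.transpose p q)"
      by (metis transpose_involutory inj_on_inverseI)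
    moreover have "E (\<chi> j. x $ Transposition.transpose p q j)
        = diag_mat (\<chi> j. vec_map exp x $ Transposition.transpose p q j)"
      by (simp add: E_def vec_eq_iff)
    ultimately show ?thesis
      using isotropic_response_diag_mat_permute[OF iso _ E(2)] by (simp add: F_def E_def)
  qed
  ultimately obtain a b where "\<And>x. F x = a *\<^sub>R x + (b * (x$1 + x$2 + x$3)) *\<^sub>R 1"
    by (rule linear_swap_equivariant_vec3) blast
  then have "T (diag_mat (vec_map exp x)) = lame (a / 2) b (diag_mat x)" for x
    using TE[of x] by (simp add: E_def lame_def trace_diag_mat sum_3 diag_mat_add diag_mat_scaleR diag_mat_one)
  then show ?thesis ..
qed

lemma isotropic_lame_on_diagonal_imp_lame_mlog:
  assumes iso: "\<And>Q U. orthogonal_matrix Q \<Longrightarrow> U \<in> PSym3 \<Longrightarrow> T (orth_conj Q U) = orth_conj Q (T U)"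
    and diag: "\<And>x. T (diag_mat (vec_map exp x)) = lame G La (diag_mat x)"
    and U: "U \<in> PSym3"
  shows "T U = lame G La (mlog U)"
proof -
  obtain P d where P: "orthogonal_matrix P" and d: "\<And>i. d$i > 0" and U_eq: "U = orth_conj P (diag_mat d)"
    using PSym3_orth_diagonalizable[OF U] by blast
  have d_exp: "diag_mat d = diag_mat (vec_map exp (vec_map ln d))"
    using d by (simp add: vec_map_ident)
  have "T U = orth_conj P (T (diag_mat d))"
    using iso[OF P, of "diag_mat d"] d by (simp add: U_eq diag_mat_in_PSym3_iff)
  also have "\<dots> = lame G La (orth_conj P (diag_mat (vec_map ln d)))"
    by (simp only: d_exp diag lame_orth_conj[OF P])
  also have "\<dots> = lame G La (mlog U)"
    using d by (simp add: U_eq mlog_orth_conj_diag_mat[OF P])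
  finally show ?thesis .
qed

lemma lame_mlog_nondegenerate:
  assumes T: "\<And>U. U \<in> PSym3 \<Longrightarrow> T U = lame G La (mlog U)"
    and zero: "\<And>U. U \<in> PSym3 \<Longrightarrow> T U = 0 \<Longrightarrow> U = mat 1"
  shows "G \<noteq> 0" "3 * La + 2 * G \<noteq> 0"
proof -
  have two: "(2::real) > 0" by simp
  show "G \<noteq> 0"
  proof
    assume "G = 0"
    then have "T (diag3 2 (1 / 2) 1) = diag3 0 0 0"
      by (simp add: T[OF diag3_shear_in_PSym3[OF two]] lame_mlog_diag3_shear[OF two])
    also have "diag3 0 0 0 = 0"
      by (simp add: diag3_def vec_eq_iff)
    finally have "diag3 2 (1 / 2) 1 = mat 1"
      by (rule zero[OF diag3_shear_in_PSym3[OF two]])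
    from arg_cong[where f = "\<lambda>M. M $ 1 $ 1", OF this] show False
      by (simp add: diag3_def mat_def)
  qed
  show "3 * La + 2 * G \<noteq> 0"
  proof
    assume "3 * La + 2 * G = 0"
    then have "T (2 *\<^sub>R mat 1) = 0 *\<^sub>R mat 1"
      by (simp add: T[OF scaleR_mat_one_in_PSym3[OF two]] lame_mlog_scaleR_mat_one[OF two])
    then have "2 *\<^sub>R mat 1 = (mat 1 :: mat3)"
      by (intro zero[OF scaleR_mat_one_in_PSym3[OF two]]) simp
    from arg_cong[where f = "\<lambda>M. M $ 1 $ 1", OF this] show False
      by (simp add: mat_def)
  qed
qed

lemma axioms_T_imp_lame_mlog:
  fixes T :: "mat3 \<Rightarrow> mat3"
  assumes "axioms_T T"
  obtains G La where "G \<noteq> 0" "3 * La + 2 * G \<noteq> 0" "\<And>U. U \<in> PSym3 \<Longrightarrow> T U = lame G La (mlog U)"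
proof -
  have cont: "continuous_on PSym3 T"
    and zero: "\<And>U. U \<in> PSym3 \<Longrightarrow> T U = 0 \<Longrightarrow> U = mat 1"
    and iso: "\<And>Q U. orthogonal_matrix Q \<Longrightarrow> U \<in> PSym3 \<Longrightarrow> T (orth_conj Q U) = orth_conj Q (T U)"
    and add: "\<And>U1 U2. U1 \<in> PSym3 \<Longrightarrow> U2 \<in> PSym3 \<Longrightarrow> coaxial U1 U2 \<Longrightarrow> T (U1 ** U2) = T U1 + T U2"
    using assms unfolding axioms_T_def orth_conj_def
    by (metis orthogonal_matrix_transpose transpose_transpose)+
  obtain G La where "\<And>x. T (diag_mat (vec_map exp x)) = lame G La (diag_mat x)"
    using isotropic_additive_response_on_diagonal[OF iso cont add] by blast
  then have T: "\<And>U. U \<in> PSym3 \<Longrightarrow> T U = lame G La (mlog U)"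
    using isotropic_lame_on_diagonal_imp_lame_mlog[OF iso] by blast
  show ?thesis
    using that lame_mlog_nondegenerate[OF T zero] T by blast
qed

lemma lame_params_iff_dev3_params:
  "(\<exists>G La. G \<noteq> 0 \<and> 3 * La + 2 * G \<noteq> 0 \<and> (\<forall>U\<in>S. T U = lame G La (L U))) \<longleftrightarrow>
   (\<exists>G K. G \<noteq> 0 \<and> K \<noteq> 0 \<and> (\<forall>U\<in>S. T U = (2 * G) *\<^sub>R dev3 (L U) + (K * trace (L U)) *\<^sub>R mat 1))"
proof -
  have lame_dev3: "lame G La M = (2 * G) *\<^sub>R dev3 M + ((La + 2 * G / 3) * trace M) *\<^sub>R mat 1" for G La M
    by (simp add: lame_def dev3_def algebra_simps)
  show ?thesis
  proof (intro iffI; elim exE conjE)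
    fix G La assume "G \<noteq> 0" "3 * La + 2 * G \<noteq> 0" "\<forall>U\<in>S. T U = lame G La (L U)"
    then show "\<exists>G K. G \<noteq> 0 \<and> K \<noteq> 0 \<and> (\<forall>U\<in>S. T U = (2 * G) *\<^sub>R dev3 (L U) + (K * trace (L U)) *\<^sub>R mat 1)"
      by (intro exI[of _ G] exI[of _ "La + 2 * G / 3"]) (auto simp: lame_dev3)
  next
    fix G K assume "G \<noteq> 0" "K \<noteq> 0"
      "\<forall>U\<in>S. T U = (2 * G) *\<^sub>R dev3 (L U) + (K * trace (L U)) *\<^sub>R mat 1"
    then show "\<exists>G La. G \<noteq> 0 \<and> 3 * La + 2 * G \<noteq> 0 \<and> (\<forall>U\<in>S. T U = lame G La (L U))"
      by (intro exI[of _ G] exI[of _ "K - 2 * G / 3"]) (auto simp: lame_dev3)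
  qed
qed

theorem mainTheorem7:
  fixes T :: "real^3^3 \<Rightarrow> real^3^3"
  assumes "\<forall>U\<in>PSym3. T U \<in> Sym3"
  shows "(axioms_T T \<longleftrightarrow>
           (\<exists>G La::real. G \<noteq> 0 \<and> 3 * La + 2 * G \<noteq> 0 \<and>
              (\<forall>U\<in>PSym3. T U = (2 * G) *\<^sub>R mlog U + (La * trace (mlog U)) *\<^sub>R mat 1)))
       \<and> (axioms_T T \<longleftrightarrow>
           (\<exists>G K::real. G \<noteq> 0 \<and> K \<noteq> 0 \<and>
              (\<forall>U\<in>PSym3. T U = (2 * G) *\<^sub>R dev3 (mlog U) + (K * trace (mlog U)) *\<^sub>R mat 1)))"
proof -
  have "axioms_T T \<longleftrightarrow>
      (\<exists>G La. G \<noteq> 0 \<and> 3 * La + 2 * G \<noteq> 0 \<and> (\<forall>U\<in>PSym3. T U = lame G La (mlog U)))"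
    by (metis axioms_T_imp_lame_mlog axioms_T_lame_mlog)
  then show ?thesis
    using lame_params_iff_dev3_params[of PSym3 T mlog] unfolding lame_def by blast
qed

end
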